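(* Let $c\ge 5$ and $g\ge 2$. The free-nilpotent complex Lie algebra $N(c,g)$ does not admit a periodic prederivation.
   Context: $N(c,g)$ denotes the free-nilpotent complex Lie algebra of nilpotency class $c$ on $g$ generators. A linear map $P:\mathfrak{g}\to\mathfrak{g}$ is a prederivation if $P([x,[y,z]])=[P(x),[y,z]]+[x,[P(y),z]]+[x,[y,P(z)]]$ for all $x,y,z\in\mathfrak{g}$; it is periodic if $P^m=\mathrm{id}$ for some integer $m\ge 1$. *)

theory Defs
  imports Complex_Main "HOL-Library.Function_Algebras"
begin

text \<open>
  Let A be the free associative complex algebra on the letters 0,...,g-1
  (non-commutative polynomials; an element is a coefficient function on words,
  i.e. on lists of letters).  Its quotient by the ideal spanned by words of
  length > c is the truncated algebra; its product is concatenation of words,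
  discarding words of length > c.  With the commutator bracket it is a Lie
  algebra, and N(c,g) is (isomorphic to) the Lie subalgebra generated by the
  g letters (free Lie algebra modulo its terms of degree > c).
\<close>

type_synonym tword = "nat list \<Rightarrow> complex"

definition tmul :: "nat \<Rightarrow> tword \<Rightarrow> tword \<Rightarrow> tword" where
  "tmul c f h = (\<lambda>w. if length w \<le> c
      then (\<Sum>i\<le>length w. f (take i w) * h (drop i w)) else 0)"

definition lie_br :: "nat \<Rightarrow> tword \<Rightarrow> tword \<Rightarrow> tword" where
  "lie_br c f h = tmul c f h - tmul c h f"

definition lie_gen :: "nat \<Rightarrow> tword" where
  "lie_gen i = (\<lambda>w. if w = [i] then 1 else 0)"

inductive_set freeNil :: "nat \<Rightarrow> nat \<Rightarrow> tword set" for c g where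
  zero: "0 \<in> freeNil c g"
| gen: "i < g \<Longrightarrow> lie_gen i \<in> freeNil c g"
| add: "x \<in> freeNil c g \<Longrightarrow> y \<in> freeNil c g \<Longrightarrow> x + y \<in> freeNil c g"
| smult: "x \<in> freeNil c g \<Longrightarrow> (\<lambda>w. a * x w) \<in> freeNil c g"
| br: "x \<in> freeNil c g \<Longrightarrow> y \<in> freeNil c g \<Longrightarrow> lie_br c x y \<in> freeNil c g"

definition is_linear_endo :: "nat \<Rightarrow> nat \<Rightarrow> (tword \<Rightarrow> tword) \<Rightarrow> bool" where
  "is_linear_endo c g P \<longleftrightarrow>
     (\<forall>x\<in>freeNil c g. P x \<in> freeNil c g) \<and>
     (\<forall>x\<in>freeNil c g. \<forall>y\<in>freeNil c g. P (x + y) = P x + P y) \<and>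
     (\<forall>a. \<forall>x\<in>freeNil c g. P (\<lambda>w. a * x w) = (\<lambda>w. a * P x w))"

definition is_prederivation :: "nat \<Rightarrow> nat \<Rightarrow> (tword \<Rightarrow> tword) \<Rightarrow> bool" where
  "is_prederivation c g P \<longleftrightarrow> is_linear_endo c g P \<and>
     (\<forall>x\<in>freeNil c g. \<forall>y\<in>freeNil c g. \<forall>z\<in>freeNil c g.
        P (lie_br c x (lie_br c y z)) =
          lie_br c (P x) (lie_br c y z) + lie_br c x (lie_br c (P y) z)
          + lie_br c x (lie_br c y (P z)))"

definition is_periodic :: "nat \<Rightarrow> nat \<Rightarrow> (tword \<Rightarrow> tword) \<Rightarrow> bool" where
  "is_periodic c g P \<longleftrightarrow> (\<exists>m::nat. m \<ge> 1 \<and> (\<forall>x\<in>freeNil c g. (P ^^ m) x = x))"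

end

theory Submission
  imports Defs
begin

text \<open>
  A periodic linear map \<open>P\<close>, say \<open>P^m = id\<close>, is diagonalisable: the discrete Fourier
  projections of a vector onto the eigenspaces for the \<open>m\<close>-th roots of unity sum to the
  vector, and every eigenvalue has modulus 1. Projecting the two generators yields
  eigenvectors \<open>u, v\<close> with eigenvalues \<open>\<alpha>, \<beta>\<close> whose linear parts are independent.
  For a prederivation, \<open>[u,[u,w]]\<close> is again an eigenvector, with eigenvalue \<open>2\<alpha>\<close> plus that
  of \<open>w\<close>; so \<open>ad(u)\<^sup>2 v\<close> and \<open>ad(u)\<^sup>4 v\<close> have eigenvalues \<open>2\<alpha> + \<beta>\<close> and \<open>4\<alpha> + \<beta>\<close>, and in
  class \<open>c \<ge> 5\<close> they do not vanish. But \<open>|\<alpha>| = |\<beta>| = |2\<alpha> + \<beta>| = 1\<close> forces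
  \<open>Re (\<alpha> \<beta>\<^sup>*) = -1\<close>, whence \<open>|4\<alpha> + \<beta>| = 3\<close>.
\<close>

definition cscale :: "complex \<Rightarrow> tword \<Rightarrow> tword" where
  "cscale a x = (\<lambda>w. a * x w)"

lemma cscale_add_left: "cscale a x + cscale b x = cscale (a + b) x"
  unfolding cscale_def by (auto simp: algebra_simps)

lemma tmul_cscale_left: "tmul c (cscale a f) h = cscale a (tmul c f h)"
  unfolding tmul_def cscale_def by (auto simp: sum_distrib_left mult.assoc)

lemma tmul_cscale_right: "tmul c f (cscale a h) = cscale a (tmul c f h)"
  unfolding tmul_def cscale_def by (auto simp: sum_distrib_left mult.left_commute)

lemma lie_br_cscale_left: "lie_br c (cscale a f) h = cscale a (lie_br c f h)"
  unfolding lie_br_def tmul_cscale_left tmul_cscale_right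
  by (simp add: cscale_def fun_eq_iff algebra_simps)

lemma lie_br_cscale_right: "lie_br c f (cscale a h) = cscale a (lie_br c f h)"
  unfolding lie_br_def tmul_cscale_left tmul_cscale_right
  by (simp add: cscale_def fun_eq_iff algebra_simps)

lemma freeNil_cscale: "x \<in> freeNil c g \<Longrightarrow> cscale a x \<in> freeNil c g"
  unfolding cscale_def by (rule freeNil.smult)

lemma freeNil_sum:
  "finite K \<Longrightarrow> (\<And>k. k \<in> K \<Longrightarrow> f k \<in> freeNil c g) \<Longrightarrow>
     (\<lambda>w. \<Sum>k\<in>K. a k * f k w) \<in> freeNil c g"
proof (induction K rule: finite_induct)
  case empty
  then show ?case using freeNil.zero by (simp add: zero_fun_def)
next
  case (insert k K)
  then have "(\<lambda>w. \<Sum>k\<in>insert k K. a k * f k w) = cscale (a k) (f k) + (\<lambda>w. \<Sum>k\<in>K. a k * f k w)"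
    by (simp add: cscale_def plus_fun_def)
  then show ?case using insert by (auto intro!: freeNil.add freeNil_cscale)
qed

lemma freeNil_Nil: "x \<in> freeNil c g \<Longrightarrow> x [] = 0"
  by (induction rule: freeNil.induct) (auto simp: lie_gen_def lie_br_def tmul_def)

lemma prederivation_in: "is_prederivation c g P \<Longrightarrow> x \<in> freeNil c g \<Longrightarrow> P x \<in> freeNil c g"
  unfolding is_prederivation_def is_linear_endo_def by blast

lemma prederivation_add:
  "is_prederivation c g P \<Longrightarrow> x \<in> freeNil c g \<Longrightarrow> y \<in> freeNil c g \<Longrightarrow> P (x + y) = P x + P y"
  unfolding is_prederivation_def is_linear_endo_def by blast

lemma prederivation_cscale:
  "is_prederivation c g P \<Longrightarrow> x \<in> freeNil c g \<Longrightarrow> P (cscale a x) = cscale a (P x)"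
  unfolding is_prederivation_def is_linear_endo_def cscale_def by blast

lemma prederivation_zero: "is_prederivation c g P \<Longrightarrow> P 0 = 0"
  using prederivation_add[OF _ freeNil.zero freeNil.zero, of c g P] by simp

lemma prederivation_funpow_in:
  "is_prederivation c g P \<Longrightarrow> x \<in> freeNil c g \<Longrightarrow> (P ^^ k) x \<in> freeNil c g"
  by (induction k) (auto intro: prederivation_in)

lemma prederivation_sum:
  assumes P: "is_prederivation c g P"
  shows "finite K \<Longrightarrow> (\<And>k. k \<in> K \<Longrightarrow> f k \<in> freeNil c g) \<Longrightarrow>
    P (\<lambda>w. \<Sum>k\<in>K. a k * f k w) = (\<lambda>w. \<Sum>k\<in>K. a k * P (f k) w)"
proof (induction K rule: finite_induct)
  case empty
  then show ?case using prederivation_zero[OF P] by (simp add: zero_fun_def)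
next
  case (insert k K)
  have split: "(\<lambda>w. \<Sum>k\<in>insert k K. a k * f k w) = cscale (a k) (f k) + (\<lambda>w. \<Sum>k\<in>K. a k * f k w)"
    using insert by (simp add: cscale_def plus_fun_def)
  have "P (cscale (a k) (f k) + (\<lambda>w. \<Sum>k\<in>K. a k * f k w))
      = P (cscale (a k) (f k)) + P (\<lambda>w. \<Sum>k\<in>K. a k * f k w)"
    using insert by (intro prederivation_add[OF P] freeNil_cscale freeNil_sum) auto
  also have "\<dots> = cscale (a k) (P (f k)) + (\<lambda>w. \<Sum>k\<in>K. a k * P (f k) w)"
    using insert by (simp add: prederivation_cscale[OF P])
  finally show ?case using split insert by (simp add: cscale_def plus_fun_def)
qed

lemma prederivation_bracket_eigen:
  assumes P: "is_prederivation c g P"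
    and x: "x \<in> freeNil c g" and y: "y \<in> freeNil c g" and z: "z \<in> freeNil c g"
    and Px: "P x = cscale a x" and Py: "P y = cscale b y" and Pz: "P z = cscale d z"
  shows "P (lie_br c x (lie_br c y z)) = cscale (a + b + d) (lie_br c x (lie_br c y z))"
  using P x y z unfolding is_prederivation_def
  by (simp add: Px Py Pz lie_br_cscale_left lie_br_cscale_right cscale_add_left)

lemma eigenvector_funpow:
  assumes P: "is_prederivation c g P" and x: "x \<in> freeNil c g" and Px: "P x = cscale a x"
  shows "(P ^^ k) x = cscale (a ^ k) x"
proof (induction k)
  case 0
  then show ?case by (simp add: cscale_def)
next
  case (Suc k)
  then have "(P ^^ Suc k) x = cscale (a ^ k) (P x)"
    using prederivation_cscale[OF P x] by simp
  then show ?case using Px by (simp add: cscale_def fun_eq_iff mult.assoc mult.commute)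
qed

lemma periodic_eigenvalue_norm:
  assumes P: "is_prederivation c g P" and per: "is_periodic c g P"
    and x: "x \<in> freeNil c g" and Px: "P x = cscale a x" and "x \<noteq> 0"
  shows "norm a = 1"
proof -
  obtain m where m: "m \<ge> 1" "(P ^^ m) x = x"
    using per x unfolding is_periodic_def by blast
  then have "cscale (a ^ m) x = x" using eigenvector_funpow[OF P x Px] by simp
  moreover obtain w where "x w \<noteq> 0" using \<open>x \<noteq> 0\<close> by (metis ext zero_fun_def)
  ultimately have "a ^ m = 1" unfolding cscale_def by (metis mult_cancel_right2 fun_eq_iff)
  then have "norm a ^ m = 1" by (metis norm_one norm_power)
  then show ?thesis using m(1) power_eq_imp_eq_base[of "norm a" m 1] by simp
qed

subsection \<open>Eigenspace decomposition of a periodic map\<close>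

definition unit_root :: "nat \<Rightarrow> complex" where
  "unit_root m = cis (2 * pi / real m)"

lemma unit_root_power: "unit_root m ^ k = cis (2 * pi * real k / real m)"
  unfolding unit_root_def DeMoivre by (simp add: mult_ac)

lemma unit_root_power_eq_1: "m \<ge> 1 \<Longrightarrow> unit_root m ^ m = 1"
  unfolding unit_root_power by simp

lemma unit_root_power_neq_1:
  assumes "0 < k" "k < m"
  shows "unit_root m ^ k \<noteq> 1"
proof
  assume "unit_root m ^ k = 1"
  then have eq: "cis (2 * pi * real k / real m) = cis (2 * pi * real 0 / real m)"
    by (simp add: unit_root_power)
  have "inj_on (\<lambda>k. cis (2 * pi * real k / real m)) {..<m}"
    using bij_betw_roots_unity[of m] assms unfolding bij_betw_def by simp
  from inj_onD[OF this eq] show False using assms by simp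
qed

text \<open>Discrete Fourier projection onto the eigenspace of \<open>P\<close> for \<open>\<zeta>\<^sup>r\<close>, \<open>\<zeta>\<close> a primitive \<open>m\<close>-th root of unity.\<close>
definition eigen_proj :: "nat \<Rightarrow> (tword \<Rightarrow> tword) \<Rightarrow> nat \<Rightarrow> tword \<Rightarrow> tword" where
  "eigen_proj m P r x = (\<lambda>w. \<Sum>k<m. (inverse (unit_root m ^ r) ^ k / of_nat m) * (P ^^ k) x w)"

lemma freeNil_eigen_proj:
  "is_prederivation c g P \<Longrightarrow> x \<in> freeNil c g \<Longrightarrow> eigen_proj m P r x \<in> freeNil c g"
  unfolding eigen_proj_def by (intro freeNil_sum) (auto intro: prederivation_funpow_in)

lemma eigen_proj_eigen:
  assumes P: "is_prederivation c g P" and m: "m \<ge> 1"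
    and per: "(P ^^ m) x = x" and x: "x \<in> freeNil c g"
  shows "P (eigen_proj m P r x) = cscale (unit_root m ^ r) (eigen_proj m P r x)"
proof -
  define z where "z = unit_root m ^ r"
  have z0: "z \<noteq> 0" unfolding z_def unit_root_def by simp
  define a where "a k = inverse z ^ k / of_nat m" for k
  obtain n where n: "m = Suc n" using m by (cases m) auto
  have "z * z ^ n = 1"
    using unit_root_power_eq_1[OF m] n unfolding z_def
    by (metis power_Suc power_mult power_mult_distrib power_one mult.commute)
  then have "inverse z ^ n = z" using z0
    by (metis inverse_unique mult.commute power_inverse inverse_inverse_eq)
  then have a_wrap: "z * a 0 = a n" unfolding a_def by simp
  have a_shift: "z * a (Suc k) = a k" for k unfolding a_def using z0 by (simp add: field_simps)
  have "P (eigen_proj m P r x) = (\<lambda>w. \<Sum>k<m. a k * (P ^^ Suc k) x w)"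
    unfolding eigen_proj_def a_def z_def
    by (subst prederivation_sum[OF P]) (auto intro: prederivation_funpow_in[OF P x])
  also have "\<dots> = (\<lambda>w. z * (\<Sum>k<m. a k * (P ^^ k) x w))"
  proof
    fix w
    have "(\<Sum>k<m. a k * (P ^^ Suc k) x w) = (\<Sum>k<n. a k * (P ^^ Suc k) x w) + a n * x w"
      using per n by simp
    moreover have "(\<Sum>k<m. a k * (P ^^ k) x w) = (\<Sum>k<n. a (Suc k) * (P ^^ Suc k) x w) + a 0 * x w"
      unfolding n sum.lessThan_Suc_shift by simp
    ultimately show "(\<Sum>k<m. a k * (P ^^ Suc k) x w) = z * (\<Sum>k<m. a k * (P ^^ k) x w)"
      by (simp add: distrib_left sum_distrib_left mult.assoc[symmetric] a_shift a_wrap)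
  qed
  finally show ?thesis unfolding eigen_proj_def cscale_def z_def a_def .
qed

lemma sum_eigen_proj:
  assumes m: "m \<ge> 1"
  shows "(\<Sum>r<m. eigen_proj m P r x w) = x w"
proof -
  have geometric: "(\<Sum>r<m. inverse (unit_root m ^ k) ^ r) = (if k = 0 then of_nat m else 0)"
    if "k < m" for k
  proof (cases "k = 0")
    case False
    have "inverse (unit_root m ^ k) \<noteq> 1"
      using unit_root_power_neq_1[of k m] False that by auto
    moreover have "inverse (unit_root m ^ k) ^ m = 1"
      using unit_root_power_eq_1[OF m]
      by (metis power_inverse power_mult mult.commute power_one inverse_1)
    ultimately show ?thesis using False by (simp add: sum_gp_strict)
  qed simp
  have "(\<Sum>r<m. eigen_proj m P r x w)
      = (\<Sum>r<m. \<Sum>k<m. inverse (unit_root m ^ k) ^ r / of_nat m * (P ^^ k) x w)"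
    unfolding eigen_proj_def
    by (intro sum.cong refl) (simp add: power_inverse[symmetric] power_mult[symmetric] mult.commute)
  also have "\<dots> = (\<Sum>k<m. (\<Sum>r<m. inverse (unit_root m ^ k) ^ r) / of_nat m * (P ^^ k) x w)"
    by (subst sum.swap) (simp add: sum_distrib_right sum_divide_distrib)
  also have "\<dots> = (\<Sum>k<m. if k = 0 then x w else 0)"
    using m by (intro sum.cong refl) (simp add: geometric)
  also have "\<dots> = x w" using m by simp
  finally show ?thesis .
qed

lemma exists_eigenvectors_independent_linear_parts:
  assumes P: "is_prederivation c g P" and per: "is_periodic c g P" and g: "g \<ge> 2"
  obtains u v \<alpha> \<beta> where "u \<in> freeNil c g" "v \<in> freeNil c g"
    "P u = cscale \<alpha> u" "P v = cscale \<beta> v" "u [0] * v [1] - u [1] * v [0] \<noteq> 0"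
proof -
  obtain m where m: "m \<ge> 1" and Pm: "\<And>x. x \<in> freeNil c g \<Longrightarrow> (P ^^ m) x = x"
    using per unfolding is_periodic_def by blast
  have e0: "lie_gen 0 \<in> freeNil c g" and e1: "lie_gen 1 \<in> freeNil c g"
    using g by (auto intro: freeNil.gen)
  define U where "U r = eigen_proj m P r (lie_gen 0)" for r
  define V where "V r = eigen_proj m P r (lie_gen 1)" for r
  have "(1::complex) = (\<Sum>r<m. U r [0]) * (\<Sum>s<m. V s [1]) - (\<Sum>r<m. U r [1]) * (\<Sum>s<m. V s [0])"
    unfolding U_def V_def sum_eigen_proj[OF m] by (simp add: lie_gen_def)
  also have "\<dots> = (\<Sum>r<m. \<Sum>s<m. U r [0] * V s [1] - U r [1] * V s [0])"
    by (simp add: sum_product sum_subtractf)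
  finally obtain r s where "U r [0] * V s [1] - U r [1] * V s [0] \<noteq> 0"
    by (metis (no_types, lifting) sum.neutral zero_neq_one)
  moreover have "U r \<in> freeNil c g" "V s \<in> freeNil c g"
    unfolding U_def V_def using P e0 e1 by (auto intro: freeNil_eigen_proj)
  moreover have "P (U r) = cscale (unit_root m ^ r) (U r)" "P (V s) = cscale (unit_root m ^ s) (V s)"
    unfolding U_def V_def using P m Pm e0 e1 by (auto intro: eigen_proj_eigen)
  ultimately show ?thesis using that by blast
qed

subsection \<open>Multilinear evaluation of homogeneous components\<close>

text \<open>
  \<open>tensor_eval [f\<^sub>1, \<dots>, f\<^sub>k] T\<close> pairs the degree-\<open>k\<close> part of \<open>T\<close>, restricted to words in
  the letters 0 and 1, with the tensor \<open>f\<^sub>1 \<otimes> \<dots> \<otimes> f\<^sub>k\<close>.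
\<close>
fun tensor_eval :: "(nat \<Rightarrow> complex) list \<Rightarrow> tword \<Rightarrow> complex" where
  "tensor_eval [] T = T []"
| "tensor_eval (f # fs) T = (\<Sum>x\<in>{0,1}. f x * tensor_eval fs (\<lambda>w. T (x # w)))"

definition vanishes_below :: "nat \<Rightarrow> tword \<Rightarrow> bool" where
  "vanishes_below k f \<longleftrightarrow> (\<forall>w. length w < k \<longrightarrow> f w = 0)"

lemma tensor_eval_cong:
  "(\<And>w. length w = length fs \<Longrightarrow> T w = T' w) \<Longrightarrow> tensor_eval fs T = tensor_eval fs T'"
proof (induction fs arbitrary: T T')
  case (Cons f fs)
  have "tensor_eval fs (\<lambda>w. T (x # w)) = tensor_eval fs (\<lambda>w. T' (x # w))" for x
    by (rule Cons.IH) (simp add: Cons.prems)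
  then show ?case by simp
qed simp

lemma tensor_eval_scale: "tensor_eval fs (\<lambda>w. a * T w) = a * tensor_eval fs T"
  by (induction fs arbitrary: T) (simp_all add: algebra_simps)

lemma tensor_eval_diff: "tensor_eval fs (T - T') = tensor_eval fs T - tensor_eval fs T'"
proof (induction fs arbitrary: T T')
  case (Cons f fs)
  have "tensor_eval fs (\<lambda>w. T (x # w) - T' (x # w))
      = tensor_eval fs (\<lambda>w. T (x # w)) - tensor_eval fs (\<lambda>w. T' (x # w))" for x
    using Cons.IH[of "\<lambda>w. T (x # w)" "\<lambda>w. T' (x # w)"] by (simp add: fun_diff_def)
  then show ?case unfolding tensor_eval.simps fun_diff_def by (simp only:) (simp add: algebra_simps)
qed simp

lemma tensor_eval_split:
  "p \<le> length fs \<Longrightarrow> tensor_eval fs (\<lambda>w. f (take p w) * h (drop p w))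
     = tensor_eval (take p fs) f * tensor_eval (drop p fs) h"
proof (induction fs arbitrary: p f)
  case (Cons \<phi> fs)
  show ?case
  proof (cases p)
    case 0
    then show ?thesis using tensor_eval_scale[of "\<phi> # fs" "f []" h] by simp
  next
    case (Suc p')
    then have "tensor_eval fs (\<lambda>w. f (x # take p' w) * h (drop p' w)) =
        tensor_eval (take p' fs) (\<lambda>w. f (x # w)) * tensor_eval (drop p' fs) h" for x
      using Cons by simp
    then show ?thesis using Suc by (simp add: algebra_simps)
  qed
qed simp

lemma vanishes_below_take_drop:
  assumes "vanishes_below p f" "vanishes_below q h"
    and "i \<le> length w" "length w \<le> p + q" "i \<noteq> p \<or> length w < p + q"
  shows "f (take i w) * h (drop i w) = 0"
proof (cases "i < p")
  case True
  then have "length (take i w) < p" by simp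
  then show ?thesis using assms(1) unfolding vanishes_below_def by simp
next
  case False
  then have "length (drop i w) < q" using assms(3-5) by auto
  then show ?thesis using assms(2) unfolding vanishes_below_def by simp
qed

lemma tmul_vanishes_below_eq:
  assumes "vanishes_below p f" "vanishes_below q h" "length w = p + q" "p + q \<le> c"
  shows "tmul c f h w = f (take p w) * h (drop p w)"
proof -
  have "tmul c f h w = (\<Sum>i\<le>length w. f (take i w) * h (drop i w))"
    using assms(3,4) unfolding tmul_def by simp
  also have "\<dots> = (\<Sum>i\<le>length w. if i = p then f (take p w) * h (drop p w) else 0)"
    using vanishes_below_take_drop[OF assms(1,2)] assms(3) by (intro sum.cong) auto
  also have "\<dots> = f (take p w) * h (drop p w)" using assms(3) by simp
  finally show ?thesis .
qed

lemma vanishes_below_tmul: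
  "vanishes_below p f \<Longrightarrow> vanishes_below q h \<Longrightarrow> vanishes_below (p + q) (tmul c f h)"
  using vanishes_below_take_drop[of p f q h]
  unfolding vanishes_below_def tmul_def by (auto intro!: sum.neutral)

lemma vanishes_below_lie_br:
  "vanishes_below p f \<Longrightarrow> vanishes_below q h \<Longrightarrow> vanishes_below (p + q) (lie_br c f h)"
  using vanishes_below_tmul[of p f q h c] vanishes_below_tmul[of q h p f c]
  unfolding lie_br_def by (simp add: vanishes_below_def add.commute)

lemma tensor_eval_lie_br:
  assumes "vanishes_below p f" "vanishes_below q h" "length fs = p + q" "p + q \<le> c"
  shows "tensor_eval fs (lie_br c f h)
    = tensor_eval (take p fs) f * tensor_eval (drop p fs) h
      - tensor_eval (take q fs) h * tensor_eval (drop q fs) f"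
proof -
  have "tensor_eval fs (tmul c f h) = tensor_eval fs (\<lambda>w. f (take p w) * h (drop p w))"
    by (rule tensor_eval_cong) (use assms tmul_vanishes_below_eq in auto)
  moreover have "tensor_eval fs (tmul c h f) = tensor_eval fs (\<lambda>w. h (take q w) * f (drop q w))"
    by (rule tensor_eval_cong) (use assms tmul_vanishes_below_eq[of q h p f] in auto)
  ultimately show ?thesis
    unfolding lie_br_def tensor_eval_diff using assms tensor_eval_split by simp
qed

lemma freeNil_vanishes_below: "x \<in> freeNil c g \<Longrightarrow> vanishes_below 1 x"
  using freeNil_Nil unfolding vanishes_below_def by auto

lemma tensor_eval_zero [simp]: "tensor_eval fs (\<lambda>_. 0) = 0"
  by (induction fs) simp_all

lemma exists_dual_functionals:
  assumes "u [0] * v [1] - u [1] * v [0] \<noteq> 0"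
  obtains \<phi> \<psi> where "tensor_eval [\<phi>] u = 1" "tensor_eval [\<psi>] u = 0"
    "tensor_eval [\<phi>] v = 0" "tensor_eval [\<psi>] v = 1"
proof
  define D where "D = u [0] * v [1] - u [1] * v [0]"
  define \<phi> where "\<phi> x = (if x = 0 then v [1] / D else - v [0] / D)" for x :: nat
  define \<psi> where "\<psi> x = (if x = 0 then - u [1] / D else u [0] / D)" for x :: nat
  have D: "D \<noteq> 0" using assms unfolding D_def .
  have "tensor_eval [\<phi>] u = (u [0] * v [1] - u [1] * v [0]) / D"
    "tensor_eval [\<psi>] v = (u [0] * v [1] - u [1] * v [0]) / D"
    "tensor_eval [\<psi>] u = 0" "tensor_eval [\<phi>] v = 0"
    using D unfolding \<phi>_def \<psi>_def by (simp_all add: field_simps)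
  then show "tensor_eval [\<phi>] u = 1" "tensor_eval [\<psi>] u = 0"
    "tensor_eval [\<phi>] v = 0" "tensor_eval [\<psi>] v = 1"
    using D unfolding D_def by simp_all
qed

lemma freeNil_iter_lie_br:
  "u \<in> freeNil c g \<Longrightarrow> v \<in> freeNil c g \<Longrightarrow> (lie_br c u ^^ k) v \<in> freeNil c g"
  by (induction k) (auto intro: freeNil.br)

lemma vanishes_below_iter_lie_br:
  assumes "vanishes_below 1 u" "vanishes_below 1 v"
  shows "vanishes_below (Suc k) ((lie_br c u ^^ k) v)"
  using vanishes_below_lie_br[OF assms(1)] assms(2) by (induction k) simp_all

lemma tensor_eval_iter_lie_br:
  assumes u: "vanishes_below 1 u" and v: "vanishes_below 1 v"
    and "tensor_eval [\<phi>] u = 1" "tensor_eval [\<psi>] u = 0" "tensor_eval [\<psi>] v = 1"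
  shows "k < c \<Longrightarrow> tensor_eval (replicate k \<phi> @ [\<psi>]) ((lie_br c u ^^ k) v) = 1"
proof (induction k)
  case (Suc k)
  let ?fs = "replicate (Suc k) \<phi> @ [\<psi>]" and ?x = "(lie_br c u ^^ k) v"
  have "tensor_eval ?fs (lie_br c u ?x)
      = tensor_eval (take 1 ?fs) u * tensor_eval (drop 1 ?fs) ?x
        - tensor_eval (take (Suc k) ?fs) ?x * tensor_eval (drop (Suc k) ?fs) u"
    by (rule tensor_eval_lie_br[OF u vanishes_below_iter_lie_br[OF u v]]) (use Suc.prems in simp_all)
  also have "\<dots> = 1"
    using Suc assms(3,4) by (simp del: tensor_eval.simps)
  finally show ?case by (simp only: funpow.simps comp_apply)
qed (use assms(5) in simp)

lemma iter_lie_br_neq_zero: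
  assumes u: "u \<in> freeNil c g" and v: "v \<in> freeNil c g"
    and indep: "u [0] * v [1] - u [1] * v [0] \<noteq> 0" and "k < c"
  shows "(lie_br c u ^^ k) v \<noteq> 0"
proof -
  obtain \<phi> \<psi> where "tensor_eval [\<phi>] u = 1" "tensor_eval [\<psi>] u = 0" "tensor_eval [\<psi>] v = 1"
    using exists_dual_functionals[OF indep] by metis
  then have "tensor_eval (replicate k \<phi> @ [\<psi>]) ((lie_br c u ^^ k) v) = 1"
    using \<open>k < c\<close> freeNil_vanishes_below[OF u] freeNil_vanishes_below[OF v]
    by (intro tensor_eval_iter_lie_br)
  then show ?thesis by (auto simp: zero_fun_def)
qed

lemma iter_lie_br_eigen:
  assumes P: "is_prederivation c g P" and u: "u \<in> freeNil c g" and v: "v \<in> freeNil c g"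
    and Pu: "P u = cscale \<alpha> u" and Pv: "P v = cscale \<beta> v"
  shows "P ((lie_br c u ^^ (2 * j)) v) = cscale (of_nat (2 * j) * \<alpha> + \<beta>) ((lie_br c u ^^ (2 * j)) v)"
proof (induction j)
  case (Suc j)
  have "P ((lie_br c u ^^ (2 * Suc j)) v)
      = cscale (\<alpha> + \<alpha> + (of_nat (2 * j) * \<alpha> + \<beta>)) ((lie_br c u ^^ (2 * Suc j)) v)"
    using prederivation_bracket_eigen[OF P u u freeNil_iter_lie_br[OF u v] Pu Pu Suc] by simp
  then show ?case by (simp add: algebra_simps)
qed (simp add: Pv)

lemma norm_4a_plus_b_neq_1:
  fixes \<alpha> \<beta> :: complex
  assumes "norm \<alpha> = 1" "norm \<beta> = 1" "norm (2 * \<alpha> + \<beta>) = 1"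
  shows "norm (4 * \<alpha> + \<beta>) \<noteq> 1"
proof
  assume "norm (4 * \<alpha> + \<beta>) = 1"
  with assms have "(Re \<alpha>)\<^sup>2 + (Im \<alpha>)\<^sup>2 = 1" "(Re \<beta>)\<^sup>2 + (Im \<beta>)\<^sup>2 = 1"
    "(2 * Re \<alpha> + Re \<beta>)\<^sup>2 + (2 * Im \<alpha> + Im \<beta>)\<^sup>2 = 1"
    "(4 * Re \<alpha> + Re \<beta>)\<^sup>2 + (4 * Im \<alpha> + Im \<beta>)\<^sup>2 = 1"
    by (simp_all add: cmod_def)
  then show False by (simp add: power2_eq_square algebra_simps)
qed

theorem corollary5p13:
  fixes c g :: nat
  assumes "c \<ge> 5" and "g \<ge> 2"
  shows "\<not> (\<exists>P. is_prederivation c g P \<and> is_periodic c g P)"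
proof
  assume "\<exists>P. is_prederivation c g P \<and> is_periodic c g P"
  then obtain P where P: "is_prederivation c g P" and per: "is_periodic c g P" by blast
  obtain u v \<alpha> \<beta> where u: "u \<in> freeNil c g" and v: "v \<in> freeNil c g"
    and Pu: "P u = cscale \<alpha> u" and Pv: "P v = cscale \<beta> v"
    and indep: "u [0] * v [1] - u [1] * v [0] \<noteq> 0"
    using exists_eigenvectors_independent_linear_parts[OF P per assms(2)] .
  have "u \<noteq> 0" using indep by auto
  then have "norm \<alpha> = 1" by (rule periodic_eigenvalue_norm[OF P per u Pu])
  moreover have chain: "norm (of_nat (2 * j) * \<alpha> + \<beta>) = 1" if "j \<le> 2" for j
    using that assms(1) iter_lie_br_neq_zero[OF u v indep, of "2 * j"]
    by (intro periodic_eigenvalue_norm[OF P per freeNil_iter_lie_br[OF u v] iter_lie_br_eigen[OF P u v Pu Pv]])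
      simp
  ultimately show False
    using norm_4a_plus_b_neq_1[of \<alpha> \<beta>] chain[of 0] chain[of 1] chain[of 2] by simp
qed

end
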